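(* Let $m\ge0$ and let $\beta_m>0$ be a real number such that $c(h)\le\beta_m\|h\|$ for every $h\in\mathbb{R}[y]$ of degree at most $m$. For $i=1,\dots,k$, let $f_i,g_i\in\mathbb{R}[y]$ be of degree $\le m$, and let $f=\sum_{i=1}^kf_i^2$, $g=\sum_{i=1}^kg_i^2$. If $\epsilon\ge0$ is such that $c(g_i-f_i)\le\epsilon$ for $i=1,\dots,k$, then $$c(g-f)\le(m+1)k\epsilon\cdot\bigl(\epsilon+2\beta_m\sqrt{\|f\|}\bigr).$$
   Context: For a polynomial $h=\sum_{i}a_iy^i\in\mathbb{R}[y]$, $c(h)=\max_i|a_i|$ (maximum absolute value of the coefficients) and $\|h\|=\max\{|h(t)|: -1\le t\le 1\}$. *)

theory Defs
  imports "HOL-Analysis.Analysis" "HOL-Computational_Algebra.Polynomial"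
begin

definition coeff_max :: "real poly \<Rightarrow> real" where
  "coeff_max h = Max ((\<lambda>i. \<bar>coeff h i\<bar>) ` {0..degree h})"

definition sup_norm :: "real poly \<Rightarrow> real" where
  "sup_norm h = Sup ((\<lambda>t. \<bar>poly h t\<bar>) ` {-1..1})"

end

theory Submission
  imports Defs
begin

text \<open>Write \<open>g\<^sub>i\<^sup>2 - f\<^sub>i\<^sup>2 = (g\<^sub>i - f\<^sub>i)((g\<^sub>i - f\<^sub>i) + 2f\<^sub>i)\<close>. Multiplying by a polynomial of degree
  at most \<open>m\<close> costs at most a factor \<open>m + 1\<close> in \<open>c\<close>, and \<open>c(f\<^sub>i) \<le> \<beta>\<^sub>m\<parallel>f\<^sub>i\<parallel> \<le> \<beta>\<^sub>m\<surd>\<parallel>f\<parallel>\<close> because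
  \<open>f\<^sub>i\<^sup>2 \<le> f\<close> pointwise.\<close>

lemma abs_coeff_le_coeff_max: "\<bar>coeff p i\<bar> \<le> coeff_max p"
proof (cases "i \<le> degree p")
  case True
  then show ?thesis unfolding coeff_max_def by (intro Max_ge) auto
next
  case False
  then have "coeff p i = 0" by (simp add: coeff_eq_0)
  moreover have "\<bar>coeff p 0\<bar> \<le> coeff_max p" unfolding coeff_max_def by (intro Max_ge) auto
  ultimately show ?thesis by simp
qed

lemma coeff_max_nonneg: "0 \<le> coeff_max p"
  using abs_coeff_le_coeff_max[of p 0] by simp

lemma coeff_max_le: "(\<And>i. \<bar>coeff p i\<bar> \<le> B) \<Longrightarrow> coeff_max p \<le> B"
  unfolding coeff_max_def by (subst Max_le_iff) auto

lemma coeff_max_add_le: "coeff_max (p + q) \<le> coeff_max p + coeff_max q"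
proof (rule coeff_max_le)
  fix i
  have "\<bar>coeff (p + q) i\<bar> \<le> \<bar>coeff p i\<bar> + \<bar>coeff q i\<bar>" by (simp add: abs_triangle_ineq)
  also have "\<dots> \<le> coeff_max p + coeff_max q"
    using abs_coeff_le_coeff_max[of p i] abs_coeff_le_coeff_max[of q i] by simp
  finally show "\<bar>coeff (p + q) i\<bar> \<le> coeff_max p + coeff_max q" .
qed

lemma coeff_max_sum_le: "coeff_max (\<Sum>i\<in>A. p i) \<le> (\<Sum>i\<in>A. coeff_max (p i))"
proof (induction A rule: infinite_finite_induct)
  case (insert x F)
  then show ?case using coeff_max_add_le[of "p x" "sum p F"] by simp
qed (use coeff_max_le[of 0 0] in simp_all)

lemma coeff_max_mult_le:
  assumes "degree p \<le> m"
  shows "coeff_max (p * q) \<le> real (m + 1) * coeff_max p * coeff_max q"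
proof (rule coeff_max_le)
  fix n
  let ?I = "{..n} \<inter> {..m}"
  have "(\<Sum>i\<le>n. coeff p i * coeff q (n - i)) = (\<Sum>i\<in>?I. coeff p i * coeff q (n - i))"
    using assms by (intro sum.mono_neutral_right) (auto simp: coeff_eq_0)
  then have "\<bar>coeff (p * q) n\<bar> = \<bar>\<Sum>i\<in>?I. coeff p i * coeff q (n - i)\<bar>"
    by (simp add: coeff_mult)
  also have "\<dots> \<le> (\<Sum>i\<in>?I. \<bar>coeff p i * coeff q (n - i)\<bar>)" by (rule sum_abs)
  also have "\<dots> \<le> (\<Sum>i\<in>?I. coeff_max p * coeff_max q)"
    by (intro sum_mono) (simp add: abs_mult mult_mono abs_coeff_le_coeff_max coeff_max_nonneg)
  also have "\<dots> = real (card ?I) * (coeff_max p * coeff_max q)" by simp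
  also have "\<dots> \<le> real (m + 1) * (coeff_max p * coeff_max q)"
  proof (intro mult_right_mono)
    have "card ?I \<le> card {..m}" by (intro card_mono) auto
    then show "real (card ?I) \<le> real (m + 1)" by simp
  qed (simp add: coeff_max_nonneg)
  finally show "\<bar>coeff (p * q) n\<bar> \<le> real (m + 1) * coeff_max p * coeff_max q"
    by (simp add: mult.assoc)
qed

lemma coeff_max_power2_diff_le:
  assumes "degree (g - f) \<le> m"
  shows "coeff_max (g\<^sup>2 - f\<^sup>2)
           \<le> real (m + 1) * coeff_max (g - f) * (coeff_max (g - f) + 2 * coeff_max f)"
proof -
  have "g\<^sup>2 - f\<^sup>2 = (g - f) * ((g - f) + f + f)" by (simp add: power2_eq_square algebra_simps)
  then have "coeff_max (g\<^sup>2 - f\<^sup>2)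
               \<le> real (m + 1) * coeff_max (g - f) * coeff_max ((g - f) + f + f)"
    using coeff_max_mult_le[OF assms] by simp
  also have "\<dots> \<le> real (m + 1) * coeff_max (g - f) * (coeff_max (g - f) + 2 * coeff_max f)"
    using coeff_max_add_le[of "(g - f) + f" f] coeff_max_add_le[of "g - f" f]
    by (intro mult_left_mono) (auto simp: coeff_max_nonneg)
  finally show ?thesis .
qed

lemma abs_poly_le_sup_norm:
  assumes "t \<in> {-1..1}"
  shows "\<bar>poly h t\<bar> \<le> sup_norm h"
proof -
  have "compact ((\<lambda>t. \<bar>poly h t\<bar>) ` {-1..1::real})"
    by (intro compact_continuous_image continuous_intros) auto
  then have "bdd_above ((\<lambda>t. \<bar>poly h t\<bar>) ` {-1..1::real})"
    by (intro bounded_imp_bdd_above compact_imp_bounded)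
  then show ?thesis unfolding sup_norm_def using assms by (intro cSUP_upper) auto
qed

lemma sup_norm_nonneg: "0 \<le> sup_norm h"
  using abs_poly_le_sup_norm[of 0 h] by simp

lemma sup_norm_le: "(\<And>t. t \<in> {-1..1} \<Longrightarrow> \<bar>poly h t\<bar> \<le> B) \<Longrightarrow> sup_norm h \<le> B"
  unfolding sup_norm_def by (intro cSUP_least) auto

lemma sup_norm_le_sqrt_sup_norm_sum_squares:
  assumes "finite A" and "i \<in> A"
  shows "sup_norm (p i) \<le> sqrt (sup_norm (\<Sum>j\<in>A. (p j)\<^sup>2))"
proof (rule sup_norm_le)
  fix t :: real assume t: "t \<in> {-1..1}"
  have "(poly (p i) t)\<^sup>2 \<le> (\<Sum>j\<in>A. (poly (p j) t)\<^sup>2)"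
    using assms by (intro member_le_sum) auto
  also have "\<dots> = poly (\<Sum>j\<in>A. (p j)\<^sup>2) t" by (simp add: poly_sum)
  also have "\<dots> \<le> sup_norm (\<Sum>j\<in>A. (p j)\<^sup>2)" using abs_poly_le_sup_norm[OF t, of "\<Sum>j\<in>A. (p j)\<^sup>2"] by simp
  finally show "\<bar>poly (p i) t\<bar> \<le> sqrt (sup_norm (\<Sum>j\<in>A. (p j)\<^sup>2))"
    using real_sqrt_le_mono by fastforce
qed

theorem lemma1p13:
  fixes m k :: nat and \<beta> \<epsilon> :: real and fs gs :: "nat \<Rightarrow> real poly"
  assumes "\<beta> > 0"
    and "\<And>h. degree h \<le> m \<Longrightarrow> coeff_max h \<le> \<beta> * sup_norm h"
    and "\<And>i. i \<in> {1..k} \<Longrightarrow> degree (fs i) \<le> m"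
    and "\<And>i. i \<in> {1..k} \<Longrightarrow> degree (gs i) \<le> m"
    and "\<epsilon> \<ge> 0"
    and "\<And>i. i \<in> {1..k} \<Longrightarrow> coeff_max (gs i - fs i) \<le> \<epsilon>"
  shows "coeff_max ((\<Sum>i=1..k. (gs i)^2) - (\<Sum>i=1..k. (fs i)^2))
           \<le> real (m + 1) * real k * \<epsilon> * (\<epsilon> + 2 * \<beta> * sqrt (sup_norm (\<Sum>i=1..k. (fs i)^2)))"
proof -
  define S where "S = sqrt (sup_norm (\<Sum>i=1..k. (fs i)^2))"
  have term_le: "coeff_max ((gs i)\<^sup>2 - (fs i)\<^sup>2) \<le> real (m + 1) * \<epsilon> * (\<epsilon> + 2 * \<beta> * S)"
    if i: "i \<in> {1..k}" for i
  proof -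
    have "coeff_max (fs i) \<le> \<beta> * sup_norm (fs i)"
      using assms(2,3) i by blast
    also have "\<dots> \<le> \<beta> * S"
      using sup_norm_le_sqrt_sup_norm_sum_squares[OF _ i, of fs] assms(1)
      unfolding S_def by (intro mult_left_mono) auto
    finally have "coeff_max (gs i - fs i) + 2 * coeff_max (fs i) \<le> \<epsilon> + 2 * \<beta> * S"
      using assms(6)[OF i] by linarith
    moreover have "degree (gs i - fs i) \<le> m"
      using assms(3,4)[OF i] degree_diff_le by blast
    ultimately have "coeff_max ((gs i)\<^sup>2 - (fs i)\<^sup>2)
        \<le> real (m + 1) * coeff_max (gs i - fs i) * (\<epsilon> + 2 * \<beta> * S)"
      using coeff_max_power2_diff_le[of "gs i" "fs i" m]
      by (meson coeff_max_nonneg mult_left_mono mult_nonneg_nonneg of_nat_0_le_iff order_trans)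
    also have "\<dots> \<le> real (m + 1) * \<epsilon> * (\<epsilon> + 2 * \<beta> * S)"
      using assms(1,5) assms(6)[OF i] sup_norm_nonneg unfolding S_def by (intro mult_right_mono mult_left_mono) auto
    finally show ?thesis .
  qed
  have "coeff_max ((\<Sum>i=1..k. (gs i)^2) - (\<Sum>i=1..k. (fs i)^2))
          \<le> (\<Sum>i=1..k. coeff_max ((gs i)\<^sup>2 - (fs i)\<^sup>2))"
    unfolding sum_subtractf[symmetric] by (rule coeff_max_sum_le)
  also have "\<dots> \<le> (\<Sum>i=1..k. real (m + 1) * \<epsilon> * (\<epsilon> + 2 * \<beta> * S))"
    by (intro sum_mono term_le) auto
  also have "\<dots> = real (m + 1) * real k * \<epsilon> * (\<epsilon> + 2 * \<beta> * S)" by simp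
  finally show ?thesis unfolding S_def .
qed

end
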